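(* Every arrow $w\in\mathcal A$ of the groupoid $\mathcal G_N$ can be represented as a reduced word in a unique way. This reduced word is either an empty word (a unit $e_i$) or, for some $d\ge 1$, a product of the form $$w=A_{i_1,i_2}^{(k)}A_{i_2,i_3}^{(-k)}A_{i_3,i_4}^{(k)}\cdots A_{i_d,i_{d+1}}^{((-1)^{d+1}k)}$$ with $k\in\{-1,1\}$ and $i_\ell\neq i_{\ell+1}$ for all $1\le \ell\le d$.
   Context: Fix an integer $N\ge 3$. Let $\mathcal G_N$ be the groupoid with object set $\{1,\dots,N\}$ generated by the arrows $A_{i,j}^{(k)}$, $i\neq j\in\{1,\dots,N\}$, $k\in\{-1,1\}$, where $A_{i,j}^{(k)}$ has source $i$ and target $j$, subject to the relations $A_{i,j}^{(k)}A_{j,\ell}^{(k)}=A_{i,\ell}^{(k)}$ for all $i,j,\ell\in\{1,\dots,N\}$, $k\in\{-1,1\}$, with the convention $A_{i,i}^{(k)}:=e_i$, the unit arrow at object $i$. A composition $fg$ is defined when the target of $f$ equals the source of $g$. Let $\mathcal A$ denote the set of arrows. A word is a composition of finitely many generators $A_{i,j}^{(k)}$ ($i\ne j$); the units $e_i$ are called empty words. A nonempty word is reduced if the generating relations cannot be applied to it so as to reduce the number of generators used; empty words are also considered reduced. Two words represent the same arrow iff one can be transformed into the other by repeated application of the generating relations. *)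

theory Defs
  imports Main
begin

text \<open>A generator A_{i,j}^(k) is encoded as the triple (i, j, k).
  A word is a pair (s, gs): s is its source object (needed so that the empty
  word e_s has an object) and gs is the list of generators, composed left to
  right (the composition fg means first f then g).\<close>

type_synonym gen = "nat \<times> nat \<times> int"
type_synonym word = "nat \<times> gen list"

definition valid_gen :: "nat \<Rightarrow> gen \<Rightarrow> bool" where
  "valid_gen N g = (case g of (i, j, k) \<Rightarrow>
     i \<in> {1..N} \<and> j \<in> {1..N} \<and> i \<noteq> j \<and> k \<in> {-1, 1})"

fun chain :: "nat \<Rightarrow> gen list \<Rightarrow> bool" where
  "chain s [] = True"
| "chain s ((i, j, k) # gs) = (i = s \<and> chain j gs)"

definition is_word :: "nat \<Rightarrow> word \<Rightarrow> bool" where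
  "is_word N w = (fst w \<in> {1..N} \<and> (\<forall>g\<in>set (snd w). valid_gen N g) \<and> chain (fst w) (snd w))"

text \<open>One application of a generating relation A_{i,j}^(k) A_{j,l}^(k) = A_{i,l}^(k)
  in the direction that reduces the number of generators (with A_{i,i}^(k) = e_i).
  Relations involving a unit on the left-hand side are trivial.\<close>

definition reduce_step :: "nat \<Rightarrow> word \<Rightarrow> word \<Rightarrow> bool" where
  "reduce_step N w w' = (is_word N w \<and>
     (\<exists>xs ys i j l k. snd w = xs @ [(i, j, k), (j, l, k)] @ ys \<and>
        w' = (fst w, xs @ (if i = l then [] else [(i, l, k)]) @ ys)))"

definition same_arrow :: "nat \<Rightarrow> word \<Rightarrow> word \<Rightarrow> bool" where
  "same_arrow N = equivclp (reduce_step N)"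

definition reduced :: "nat \<Rightarrow> word \<Rightarrow> bool" where
  "reduced N w = (\<not> (\<exists>w'. reduce_step N w w'))"

end

theory Submission
  imports Defs
begin

text \<open>Push the generators of a word, from right to left, onto an alternating word,
  composing with the first letter whenever the signs agree (and dropping the result
  if it is a unit). This normal form is invariant under the generating relations,
  because pushing two composable generators of equal sign has the same effect as
  pushing their composite. A reduced word has no two adjacent generators of equal
  sign, so it is alternating and is its own normal form; hence two equivalent
  reduced words coincide. Existence follows since each relation shortens a word,
  and as the signs lie in {-1, 1}, an alternating word has the stated shape.\<close>

fun target :: "nat \<Rightarrow> gen list \<Rightarrow> nat" where
  "target s [] = s"
| "target s ((i, j, k) # gs) = target j gs"

fun alternating :: "gen list \<Rightarrow> bool" where
  "alternating (a # b # gs) = (snd (snd a) \<noteq> snd (snd b) \<and> alternating (b # gs))"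
| "alternating _ = True"

fun push :: "gen \<Rightarrow> gen list \<Rightarrow> gen list" where
  "push (i, j, k) [] = [(i, j, k)]"
| "push (i, j, k) ((j', l, k') # gs) =
     (if k = k' then (if i = l then gs else (i, l, k) # gs)
      else (i, j, k) # (j', l, k') # gs)"

definition normal_form :: "gen list \<Rightarrow> gen list" where
  "normal_form gs = foldr push gs []"

lemma chain_append: "chain s (xs @ ys) \<longleftrightarrow> chain s xs \<and> chain (target s xs) ys"
  by (induction xs arbitrary: s) auto

lemma chain_nth_source:
  "chain s gs \<Longrightarrow> p < length gs \<Longrightarrow> fst (gs ! p) = (s # map (fst \<circ> snd) gs) ! p"
proof (induction gs arbitrary: s p)
  case (Cons g gs)
  then show ?case by (cases g; cases p) auto
qed simp

lemma alternating_ConsD: "alternating (g # gs) \<Longrightarrow> alternating gs"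
  by (cases gs) auto

lemma alternating_sign_nth:
  assumes "alternating gs" "\<forall>g\<in>set gs. snd (snd g) \<in> {-1, 1}" "p < length gs"
  shows "snd (snd (gs ! p)) = (-1) ^ p * snd (snd (gs ! 0))"
  using assms
proof (induction gs arbitrary: p rule: alternating.induct)
  case (1 a b gs)
  show ?case
  proof (cases p)
    case (Suc q)
    have "snd (snd ((b # gs) ! q)) = (-1) ^ q * snd (snd b)"
      using 1 Suc by (auto simp del: alternating.simps dest: alternating_ConsD)
    moreover have "snd (snd b) = - snd (snd a)" using "1.prems"(1,2) by auto
    ultimately show ?thesis using Suc by simp
  qed simp
qed auto

lemma not_alternating_split:
  "\<not> alternating gs \<Longrightarrow> \<exists>xs a b ys. gs = xs @ [a, b] @ ys \<and> snd (snd a) = snd (snd b)"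
proof (induction gs rule: alternating.induct)
  case (1 a b gs)
  show ?case
  proof (cases "snd (snd a) = snd (snd b)")
    case True
    then show ?thesis by (metis append_Cons append_Nil)
  next
    case False
    with 1 obtain xs c d ys where "b # gs = xs @ [c, d] @ ys" "snd (snd c) = snd (snd d)"
      by auto
    then show ?thesis by (metis append_Cons)
  qed
qed auto

lemma push_alternating_Cons: "alternating (g # gs) \<Longrightarrow> push g gs = g # gs"
  by (cases g; cases gs) auto

lemma alternating_push: "alternating gs \<Longrightarrow> alternating (push g gs)"
proof (cases g, cases gs)
  fix i j k h gs' assume "g = (i, j, k)" "gs = h # gs'" "alternating gs"
  then show ?thesis by (cases h; cases gs') (auto dest: alternating_ConsD)
qed auto

lemma chain_push: "chain j gs \<Longrightarrow> chain i (push (i, j, k) gs)"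
  by (cases gs) auto

lemma valid_push:
  "valid_gen N g \<Longrightarrow> \<forall>h\<in>set gs. valid_gen N h \<Longrightarrow> \<forall>h\<in>set (push g gs). valid_gen N h"
  by (cases g; cases gs) (auto simp: valid_gen_def split: if_splits)

lemma push_push_same_sign:
  assumes "i \<noteq> j" "chain l gs" "alternating gs" "\<forall>g\<in>set gs. valid_gen N g"
  shows "push (i, j, k) (push (j, l, k) gs) = (if i = l then gs else push (i, l, k) gs)"
proof (cases gs)
  case (Cons h gs')
  then show ?thesis
    using assms by (cases h; cases gs') (auto simp: valid_gen_def)
qed simp

lemma normal_form_Cons: "normal_form (g # gs) = push g (normal_form gs)"
  by (simp add: normal_form_def)

lemma normal_form_append: "normal_form (xs @ ys) = foldr push xs (normal_form ys)"
  by (simp add: normal_form_def)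

lemma normal_form_alternating: "alternating gs \<Longrightarrow> normal_form gs = gs"
proof (induction gs)
  case (Cons g gs)
  then show ?case
    by (simp add: normal_form_Cons push_alternating_Cons alternating_ConsD[OF Cons.prems])
qed (simp add: normal_form_def)

lemma alternating_normal_form: "alternating (normal_form gs)"
  by (induction gs) (auto simp: normal_form_def alternating_push)

lemma chain_normal_form: "chain s gs \<Longrightarrow> chain s (normal_form gs)"
proof (induction gs arbitrary: s)
  case (Cons g gs)
  then show ?case by (cases g) (auto simp: normal_form_Cons chain_push)
qed (simp add: normal_form_def)

lemma valid_normal_form:
  "\<forall>g\<in>set gs. valid_gen N g \<Longrightarrow> \<forall>g\<in>set (normal_form gs). valid_gen N g"
proof (induction gs)
  case (Cons g gs)
  then show ?case
    using valid_push[of N g "normal_form gs"] by (simp add: normal_form_Cons)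
qed (simp add: normal_form_def)

lemma reduce_step_is_word:
  assumes "reduce_step N w w'"
  shows "is_word N w' \<and> fst w' = fst w"
proof -
  from assms obtain xs ys i j l k where w: "is_word N w"
    and split: "snd w = xs @ [(i, j, k), (j, l, k)] @ ys"
    and w': "w' = (fst w, xs @ (if i = l then [] else [(i, l, k)]) @ ys)"
    unfolding reduce_step_def by blast
  have "chain (fst w) xs" "target (fst w) xs = i" "chain l ys"
    using w split by (auto simp: is_word_def chain_append)
  moreover have "valid_gen N (i, j, k)" "valid_gen N (j, l, k)"
    using w split by (auto simp: is_word_def)
  ultimately show ?thesis
    using w split w' by (auto simp: is_word_def chain_append valid_gen_def)
qed

lemma normal_form_reduce_step:
  assumes "reduce_step N w w'"
  shows "normal_form (snd w') = normal_form (snd w)"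
proof -
  from assms obtain xs ys i j l k where w: "is_word N w"
    and split: "snd w = xs @ [(i, j, k), (j, l, k)] @ ys"
    and w': "w' = (fst w, xs @ (if i = l then [] else [(i, l, k)]) @ ys)"
    unfolding reduce_step_def by blast
  have "i \<noteq> j" "\<forall>g\<in>set ys. valid_gen N g" "chain l ys"
    using w split by (auto simp: is_word_def chain_append valid_gen_def)
  then have "push (i, j, k) (push (j, l, k) (normal_form ys))
      = (if i = l then normal_form ys else push (i, l, k) (normal_form ys))"
    by (intro push_push_same_sign chain_normal_form alternating_normal_form valid_normal_form)
  then show ?thesis
    using split w' by (simp add: normal_form_append normal_form_Cons)
qed

lemma same_arrow_normal_form:
  assumes "same_arrow N w r" "is_word N w"
  shows "is_word N r \<and> fst r = fst w \<and> normal_form (snd r) = normal_form (snd w)"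
proof -
  from assms(1) have "equivclp (reduce_step N) w r"
    by (simp add: same_arrow_def)
  then show ?thesis
  proof (induction rule: equivclp_induct)
    case (step r r')
    then show ?case
      using reduce_step_is_word normal_form_reduce_step reduce_step_def by metis
  qed (simp add: assms(2))
qed

lemma reduced_alternating:
  assumes "is_word N w" "reduced N w"
  shows "alternating (snd w)"
proof (rule ccontr)
  assume "\<not> alternating (snd w)"
  then obtain xs i j k j' l k' ys where split: "snd w = xs @ [(i, j, k), (j', l, k')] @ ys"
    and "k = k'"
    using not_alternating_split by fastforce
  moreover have "j' = j"
    using assms(1) split by (simp add: is_word_def chain_append)
  ultimately have "reduce_step N w (fst w, xs @ (if i = l then [] else [(i, l, k)]) @ ys)"
    using assms(1) unfolding reduce_step_def by blast
  with assms(2) show False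
    unfolding reduced_def by blast
qed

lemma reduced_normal_form:
  "is_word N r \<Longrightarrow> reduced N r \<Longrightarrow> normal_form (snd r) = snd r"
  by (simp add: normal_form_alternating reduced_alternating)

lemma exists_reduced:
  "is_word N w \<Longrightarrow> \<exists>r. is_word N r \<and> reduced N r \<and> same_arrow N w r"
proof (induction "length (snd w)" arbitrary: w rule: less_induct)
  case less
  show ?case
  proof (cases "reduced N w")
    case True
    moreover have "same_arrow N w w"
      by (simp add: same_arrow_def)
    ultimately show ?thesis
      using less.prems by blast
  next
    case False
    then obtain w' where step: "reduce_step N w w'"
      unfolding reduced_def by blast
    moreover have "length (snd w') < length (snd w)"
      using step unfolding reduce_step_def by auto
    ultimately obtain r where "is_word N r" "reduced N r" "same_arrow N w' r"
      using less.hyps reduce_step_is_word by blast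
    moreover have "same_arrow N w w'"
      using step by (auto simp: same_arrow_def)
    ultimately show ?thesis
      unfolding same_arrow_def by (meson equivclp_trans)
  qed
qed

lemma alternating_chain_shape:
  assumes chain: "chain s gs" and alt: "alternating gs"
    and valid: "\<forall>g\<in>set gs. valid_gen N g" and nonempty: "gs \<noteq> []"
  shows "\<exists>d::nat. d \<ge> 1 \<and> (\<exists>k::int. k \<in> {-1, 1} \<and> (\<exists>i::nat \<Rightarrow> nat.
           gs = map (\<lambda>l. (i l, i (l + 1), (-1) ^ (l + 1) * k)) [1..<d + 1]
           \<and> (\<forall>l\<in>{1..d}. i l \<noteq> i (l + 1))))"
proof -
  define d where "d = length gs"
  define k where "k = snd (snd (gs ! 0))"
  define i where "i l = (s # map (fst \<circ> snd) gs) ! (l - 1)" for l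
  have source: "i (Suc p) = fst (gs ! p)" and target: "i (Suc (Suc p)) = fst (snd (gs ! p))"
    if "p < d" for p
    using that chain_nth_source[OF chain, of p] by (simp_all add: i_def d_def)
  have signs: "\<forall>g\<in>set gs. snd (snd g) \<in> {-1, 1}"
    using valid by (auto simp: valid_gen_def)
  then have "k \<in> {-1, 1}"
    using nonempty by (simp add: k_def)
  have sign: "snd (snd (gs ! p)) = (-1) ^ (Suc p + 1) * k" if "p < d" for p
    using alternating_sign_nth[OF alt signs, of p] that by (simp add: k_def d_def)
  have "gs = map (\<lambda>p. gs ! p) [0..<d]"
    by (simp add: d_def map_nth)
  also have "\<dots> = map (\<lambda>p. (i (Suc p), i (Suc p + 1), (-1) ^ (Suc p + 1) * k)) [0..<d]"
    using source target sign by (intro map_cong) (auto simp: prod_eq_iff)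
  also have "\<dots> = map (\<lambda>l. (i l, i (l + 1), (-1) ^ (l + 1) * k)) [1..<d + 1]"
    by (simp add: map_Suc_upt[symmetric] comp_def del: upt_Suc)
  finally have "gs = map (\<lambda>l. (i l, i (l + 1), (-1) ^ (l + 1) * k)) [1..<d + 1]" .
  moreover have "i l \<noteq> i (l + 1)" if "l \<in> {1..d}" for l
  proof -
    obtain p where p: "l = Suc p" "p < d"
      using \<open>l \<in> {1..d}\<close> by (cases l) auto
    have "valid_gen N (gs ! p)"
      using valid p(2) by (simp add: d_def)
    then show ?thesis
      using source[OF p(2)] target[OF p(2)] p(1) by (auto simp: valid_gen_def split: prod.splits)
  qed
  moreover have "d \<ge> 1"
    using nonempty by (simp add: d_def Suc_le_eq)
  ultimately show ?thesis
    using \<open>k \<in> {-1, 1}\<close> by blast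
qed

lemma exists_unique_reduced_word:
  assumes w: "is_word N w"
  shows "\<exists>!r. is_word N r \<and> reduced N r \<and> same_arrow N w r"
proof (rule ex_ex1I)
  show "\<exists>r. is_word N r \<and> reduced N r \<and> same_arrow N w r"
    using exists_reduced[OF w] .
next
  fix r r'
  assume r: "is_word N r \<and> reduced N r \<and> same_arrow N w r"
    and r': "is_word N r' \<and> reduced N r' \<and> same_arrow N w r'"
  have "fst r = fst w" "snd r = normal_form (snd w)"
    using r same_arrow_normal_form[OF _ w, of r] reduced_normal_form[of N r] by auto
  moreover have "fst r' = fst w" "snd r' = normal_form (snd w)"
    using r' same_arrow_normal_form[OF _ w, of r'] reduced_normal_form[of N r'] by auto
  ultimately show "r = r'"
    by (simp add: prod_eq_iff)
qed

lemma reduced_word_shape: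
  assumes "is_word N r" "reduced N r"
  shows "snd r = [] \<or> (\<exists>d::nat. d \<ge> 1 \<and> (\<exists>k::int. k \<in> {-1, 1} \<and> (\<exists>i::nat \<Rightarrow> nat.
           snd r = map (\<lambda>l. (i l, i (l + 1), (-1) ^ (l + 1) * k)) [1..<d + 1]
           \<and> (\<forall>l\<in>{1..d}. i l \<noteq> i (l + 1)))))"
proof (cases "snd r = []")
  case False
  have "chain (fst r) (snd r)" "alternating (snd r)" "\<forall>g\<in>set (snd r). valid_gen N g"
    using assms reduced_alternating by (auto simp: is_word_def)
  then show ?thesis
    using alternating_chain_shape[of "fst r" "snd r" N] False by simp
qed simp

theorem lemma2p1:
  fixes N :: nat
  assumes "N \<ge> 3"
  shows "(\<forall>w. is_word N w \<longrightarrow>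
            (\<exists>!r. is_word N r \<and> reduced N r \<and> same_arrow N w r))
       \<and> (\<forall>r. is_word N r \<and> reduced N r \<longrightarrow>
            snd r = [] \<or>
            (\<exists>d::nat. d \<ge> 1 \<and> (\<exists>k::int. k \<in> {-1, 1} \<and> (\<exists>i::nat \<Rightarrow> nat.
               snd r = map (\<lambda>l. (i l, i (l + 1), (-1) ^ (l + 1) * k)) [1..<d + 1]
               \<and> (\<forall>l\<in>{1..d}. i l \<noteq> i (l + 1))))))"
proof (intro conjI allI impI, goal_cases)
  \<comment> \<open>The normal form argument works for every N.\<close>
  case (1 w)
  then show ?case
    by (rule exists_unique_reduced_word)
next
  case (2 r)
  then show ?case
    by (elim conjE) (rule reduced_word_shape)
qed

end
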